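(* Let $\mathcal S$ be one of the step sets $\mathcal B,\mathcal C,\mathcal D,\mathcal E$. For any $k\ge1$ and any $Q_k\in S_k$, the generating function $\sum_{n\ge0}\#_{\mathcal S}\{(0,0)\xrightarrow{n}Q_k\}t^n$ is a rational function of $t$, whose first pole (i.e., pole of smallest modulus) is at $t=\big(2\cos(\tfrac{\pi}{2+k})\big)^{-1}$.
   Context: Let $\mathbb N=\{0,1,2,\dots\}$. For a step set $\mathcal S\subset\{-1,0,1\}^2$, a quarter-plane walk of length $n$ is a sequence $p_0=(0,0),p_1,\dots,p_n$ of points of $\mathbb N^2$ with $p_m-p_{m-1}\in\mathcal S$ for all $m$; $\#_{\mathcal S}\{(0,0)\xrightarrow{n}(i,j)\}$ is the number of such walks ending at $(i,j)$. The step sets are $\mathcal B=\{(-1,1),(0,1),(1,0),(1,-1)\}$, $\mathcal C=\{(-1,1),(0,1),(1,1),(1,0),(1,-1)\}$, $\mathcal D=\{(-1,1),(0,1),(1,-1)\}$, $\mathcal E=\{(-1,1),(0,1),(1,1),(1,-1)\}$. For $k\ge0$, $S_k=\{(k-i,i):0\le i\le k\}$. *)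

theory Defs
  imports Complex_Main "HOL-Computational_Algebra.Computational_Algebra"
begin

definition quarter_plane :: "(int \<times> int) set" where
  "quarter_plane = {(i, j). 0 \<le> i \<and> 0 \<le> j}"

definition stepB :: "(int \<times> int) set" where
  "stepB = {(-1, 1), (0, 1), (1, 0), (1, -1)}"
definition stepC :: "(int \<times> int) set" where
  "stepC = {(-1, 1), (0, 1), (1, 1), (1, 0), (1, -1)}"
definition stepD :: "(int \<times> int) set" where
  "stepD = {(-1, 1), (0, 1), (1, -1)}"
definition stepE :: "(int \<times> int) set" where
  "stepE = {(-1, 1), (0, 1), (1, 1), (1, -1)}"

text \<open>Quarter-plane walks of length n with steps in S, from (0,0) to P,
  represented as the list of visited points p_0, ..., p_n.\<close>
definition qp_walks :: "(int \<times> int) set \<Rightarrow> nat \<Rightarrow> int \<times> int \<Rightarrow> (int \<times> int) list set" where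
  "qp_walks S n P = {ps. length ps = n + 1 \<and> ps ! 0 = (0, 0) \<and> ps ! n = P \<and>
      (\<forall>m\<le>n. ps ! m \<in> quarter_plane) \<and>
      (\<forall>m. 1 \<le> m \<and> m \<le> n \<longrightarrow> (fst (ps ! m) - fst (ps ! (m - 1)), snd (ps ! m) - snd (ps ! (m - 1))) \<in> S)}"

definition num_walks :: "(int \<times> int) set \<Rightarrow> nat \<Rightarrow> int \<times> int \<Rightarrow> nat" where
  "num_walks S n P = card (qp_walks S n P)"

definition walk_gf :: "(int \<times> int) set \<Rightarrow> int \<times> int \<Rightarrow> complex fps" where
  "walk_gf S P = Abs_fps (\<lambda>n. of_nat (num_walks S n P))"

definition antidiag :: "nat \<Rightarrow> (int \<times> int) set" where
  "antidiag k = {(int k - int i, int i) | i. i \<le> k}"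

end

theory Submission
  imports Defs "HOL-Analysis.FPS_Convergence" "HOL-Computational_Algebra.Field_as_Ring"
begin

(* All of B, C, D, E contain D and lie in C, and every step of C raises the level i + j by 0 or 1.
   Walks ending on S_k therefore stay in a finite triangle, so their counts satisfy a linear
   recurrence and the generating function is rational.  Within a level, the steps (-1,1) and
   (1,-1) move along the path 0 - 1 - ... - k, whose adjacency matrix has Perron eigenvalue
   lambda = 2 cos (pi / (k + 2)).  Comparing the counts with the Perron eigenvector bounds them
   by C L^n for every L > lambda (steps in C), so the series converges for |t| < 1/lambda and the
   reduced denominator has no root there; it also bounds sums of k + 1 consecutive counts from
   below by a multiple of lambda^n (steps of D available), so the nonnegative series diverges at
   t = 1/lambda, which forces a root of the denominator there. *)

lemma qp_walks_iff:
  "ps \<in> qp_walks S n P \<longleftrightarrow>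
     length ps = Suc n \<and> ps ! 0 = (0, 0) \<and> ps ! n = P \<and> (\<forall>m\<le>n. ps ! m \<in> quarter_plane) \<and>
     (\<forall>m. 1 \<le> m \<and> m \<le> n \<longrightarrow> ps ! m - ps ! (m - 1) \<in> S)"
  by (simp add: qp_walks_def minus_prod_def)

lemma qp_walks_0: "qp_walks S 0 P = (if P = (0, 0) then {[P]} else {})"
proof -
  have "ps \<in> qp_walks S 0 P \<longleftrightarrow> P = (0, 0) \<and> ps = [P]" for ps
    by (cases ps) (auto simp: qp_walks_iff quarter_plane_def)
  then show ?thesis by auto
qed

lemma snoc_in_qp_walks_iff:
  "ps @ [P] \<in> qp_walks S (Suc n) P \<longleftrightarrow> P \<in> quarter_plane \<and> (\<exists>s\<in>S. ps \<in> qp_walks S n (P - s))"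
proof (cases "length ps = Suc n")
  case True
  then have prefix: "(ps @ [P]) ! m = ps ! m" if "m \<le> n" for m
    using that by (simp add: nth_append)
  have last: "(ps @ [P]) ! Suc n = P"
    using True by (simp add: nth_append)
  have "ps @ [P] \<in> qp_walks S (Suc n) P \<longleftrightarrow>
      P \<in> quarter_plane \<and> P - ps ! n \<in> S \<and> ps \<in> qp_walks S n (ps ! n)"
    unfolding qp_walks_iff using True prefix last by (auto simp: le_Suc_eq)
  also have "\<dots> \<longleftrightarrow> P \<in> quarter_plane \<and> (\<exists>s\<in>S. ps \<in> qp_walks S n (P - s))"
    by (auto simp: qp_walks_iff intro!: bexI[of _ "P - ps ! n"])
  finally show ?thesis .
qed (auto simp: qp_walks_iff)

lemma qp_walks_Suc:
  "qp_walks S (Suc n) P =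
     (if P \<in> quarter_plane then (\<Union>s\<in>S. (\<lambda>ps. ps @ [P]) ` qp_walks S n (P - s)) else {})"
proof -
  have "ps = butlast ps @ [P]" if "ps \<in> qp_walks S (Suc n) P" for ps
    using that append_butlast_last_id[of ps] last_conv_nth[of ps]
    by (cases "ps = []") (auto simp: qp_walks_iff)
  then have "qp_walks S (Suc n) P = (\<lambda>ps. ps @ [P]) ` {ps. ps @ [P] \<in> qp_walks S (Suc n) P}"
    by (auto simp: image_iff) (metis mem_Collect_eq)
  then show ?thesis
    by (auto simp: snoc_in_qp_walks_iff)
qed

lemma finite_qp_walks: "finite S \<Longrightarrow> finite (qp_walks S n P)"
  by (induction n arbitrary: P) (simp_all add: qp_walks_0 qp_walks_Suc)

lemma num_walks_0: "num_walks S 0 P = (if P = (0, 0) then 1 else 0)"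
  by (simp add: num_walks_def qp_walks_0)

lemma num_walks_outside: "P \<notin> quarter_plane \<Longrightarrow> num_walks S n P = 0"
  by (cases n) (auto simp: num_walks_def qp_walks_0 qp_walks_Suc quarter_plane_def)

lemma num_walks_Suc:
  assumes "finite S"
  shows "num_walks S (Suc n) P =
           (if P \<in> quarter_plane then (\<Sum>s\<in>S. num_walks S n (P - s)) else 0)"
proof -
  have "card (\<Union>s\<in>S. (\<lambda>ps. ps @ [P]) ` qp_walks S n (P - s)) =
        (\<Sum>s\<in>S. card ((\<lambda>ps. ps @ [P]) ` qp_walks S n (P - s)))"
    by (rule card_UN_disjoint) (auto simp: assms finite_qp_walks qp_walks_iff)
  also have "\<dots> = (\<Sum>s\<in>S. num_walks S n (P - s))"
    unfolding num_walks_def by (intro sum.cong refl card_image) (auto intro: inj_onI)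
  finally show ?thesis by (simp add: num_walks_def qp_walks_Suc)
qed

lemma finite_family_linear_dependent:
  fixes w :: "'i \<Rightarrow> 'a \<Rightarrow> 'f::field"
  assumes "finite T" and "finite I" and "card T < card I"
  shows "\<exists>c. (\<exists>i\<in>I. c i \<noteq> 0) \<and> (\<forall>P\<in>T. (\<Sum>i\<in>I. c i * w i P) = 0)"
  using assms
proof (induction T arbitrary: I w rule: finite_induct)
  case empty
  then show ?case by (intro exI[of _ "\<lambda>_. 1"]) (auto simp: card_gt_0_iff)
next
  case (insert P T)
  show ?case
  proof (cases "\<forall>i\<in>I. w i P = 0")
    case True
    obtain c where "\<exists>i\<in>I. c i \<noteq> 0" and "\<forall>Q\<in>T. (\<Sum>i\<in>I. c i * w i Q) = 0"
      using insert.IH[of I w] insert.prems insert.hyps by auto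
    then show ?thesis using True by (intro exI[of _ c]) auto
  next
    case False
    then obtain j where j: "j \<in> I" "w j P \<noteq> 0" by blast
    define w' where "w' i Q = w i Q - w i P / w j P * w j Q" for i Q
    have "card T < card (I - {j})"
      using insert.prems insert.hyps j by simp
    then obtain c' where c'_nz: "\<exists>i\<in>I - {j}. c' i \<noteq> 0"
      and c'_T: "\<forall>Q\<in>T. (\<Sum>i\<in>I - {j}. c' i * w' i Q) = 0"
      using insert.IH[of "I - {j}" w'] insert.prems by auto
    define c where "c i = (if i = j then - (\<Sum>l\<in>I - {j}. c' l * w l P) / w j P else c' i)" for i
    have eliminated: "(\<Sum>i\<in>I. c i * w i Q) = (\<Sum>i\<in>I - {j}. c' i * w' i Q)" for Q
    proof -
      have "(\<Sum>i\<in>I. c i * w i Q) = c j * w j Q + (\<Sum>i\<in>I - {j}. c' i * w i Q)"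
        using j insert.prems by (simp add: sum.remove c_def)
      also have "\<dots> = (\<Sum>i\<in>I - {j}. c' i * w' i Q)"
        by (simp add: w'_def c_def algebra_simps sum_subtractf sum_distrib_left
            sum_divide_distrib)
      finally show ?thesis .
    qed
    have "w' i P = 0" for i
      using j by (simp add: w'_def)
    then have "\<forall>Q\<in>insert P T. (\<Sum>i\<in>I. c i * w i Q) = 0"
      using c'_T by (simp add: eliminated)
    moreover have "\<exists>i\<in>I. c i \<noteq> 0"
      using c'_nz by (auto simp: c_def)
    ultimately show ?thesis by blast
  qed
qed

lemma fps_rational_if_linear_recurrence:
  fixes F :: "'a::field fps" and c :: "nat \<Rightarrow> 'a"
  assumes nontrivial: "\<exists>i\<le>m. c i \<noteq> 0" and recurrence: "\<And>n. (\<Sum>i\<le>m. c i * F $ (n + i)) = 0"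
  shows "\<exists>p q. q \<noteq> 0 \<and> fps_of_poly q * F = fps_of_poly p"
proof -
  define q where "q = Poly (map (\<lambda>j. c (m - j)) [0..<Suc m])"
  have coeff_q: "coeff q j = (if j \<le> m then c (m - j) else 0)" for j
    by (simp add: q_def nth_default_def del: upt_Suc)
  obtain i where "i \<le> m" "c i \<noteq> 0"
    using nontrivial by blast
  then have "coeff q (m - i) \<noteq> 0"
    by (simp add: coeff_q)
  then have "q \<noteq> 0"
    by auto
  have "(fps_of_poly q * F) $ n = 0" if "m \<le> n" for n
  proof -
    have "(fps_of_poly q * F) $ n = (\<Sum>j\<le>m. c (m - j) * F $ (n - j))"
      using that by (auto simp: fps_mult_nth coeff_q atLeast0AtMost split: if_splits
          intro!: sum.mono_neutral_cong_right)
    also have "\<dots> = (\<Sum>i\<le>m. c i * F $ (n - m + i))"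
      by (rule sum.reindex_bij_witness[of _ "\<lambda>i. m - i" "\<lambda>i. m - i"]) (use that in auto)
    also have "\<dots> = 0"
      by (rule recurrence)
    finally show ?thesis .
  qed
  then have "fps_of_poly q * F = fps_of_poly (truncate_fps m (fps_of_poly q * F))"
    by (auto simp: fps_eq_iff fps_cutoff_def)
  with \<open>q \<noteq> 0\<close> show ?thesis by blast
qed

lemma fps_rational_coprime:
  fixes F :: "'a::field_gcd fps"
  assumes "q \<noteq> 0" and "fps_of_poly q * F = fps_of_poly p"
  shows "\<exists>p' q'. q' \<noteq> 0 \<and> coprime p' q' \<and> fps_of_poly q' * F = fps_of_poly p'"
proof (intro exI conjI)
  define g where "g = gcd p q"
  have "g \<noteq> 0" "q = q div g * g" "p = p div g * g"
    using assms(1) by (simp_all add: g_def)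
  then have "fps_of_poly g * (fps_of_poly (q div g) * F) = fps_of_poly g * fps_of_poly (p div g)"
    using assms(2) by (metis fps_of_poly_mult mult.assoc mult.commute)
  moreover have "fps_of_poly g \<noteq> 0"
    using \<open>g \<noteq> 0\<close> by (metis fps_of_poly_0 fps_of_poly_eq_iff)
  ultimately show "fps_of_poly (q div g) * F = fps_of_poly (p div g)"
    by simp
  show "q div g \<noteq> 0"
    using \<open>q = q div g * g\<close> assms(1) by auto
  show "coprime (p div g) (q div g)"
    unfolding g_def by (rule div_gcd_coprime) (use assms(1) in simp)
qed

lemma walk_gf_rational:
  assumes "finite S" and levels: "\<forall>s\<in>S. 0 \<le> fst s + snd s" and "Q \<in> quarter_plane"
  shows "\<exists>p q. q \<noteq> 0 \<and> fps_of_poly q * walk_gf S Q = fps_of_poly p"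
proof -
  define T where "T = {P \<in> quarter_plane. fst P + snd P \<le> fst Q + snd Q}"
  have "T \<subseteq> {0..fst Q + snd Q} \<times> {0..fst Q + snd Q}"
    by (auto simp: T_def quarter_plane_def)
  then have "finite T"
    by (rule finite_subset) simp
  then obtain c :: "nat \<Rightarrow> complex" where nontrivial: "\<exists>i\<le>card T. c i \<noteq> 0"
    and base: "\<forall>P\<in>T. (\<Sum>i\<le>card T. c i * of_nat (num_walks S i P)) = 0"
    using finite_family_linear_dependent[of T "{..card T}" "\<lambda>i P. of_nat (num_walks S i P)"]
    by auto
  have recurrence: "(\<Sum>i\<le>card T. c i * of_nat (num_walks S (n + i) P)) = 0" if "P \<in> T" for n P
    using that
  proof (induction n arbitrary: P)
    case 0
    then show ?case using base by simp
  next
    case (Suc n)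
    have "P - s \<in> T" if "s \<in> S" "P - s \<in> quarter_plane" for s
      using that Suc.prems levels by (auto simp: T_def)
    then have predecessors: "(\<Sum>i\<le>card T. c i * of_nat (num_walks S (n + i) (P - s))) = 0"
      if "s \<in> S" for s
      using that Suc.IH num_walks_outside by (cases "P - s \<in> quarter_plane") auto
    show ?case
    proof (cases "P \<in> quarter_plane")
      case True
      then show ?thesis
        using predecessors
        by (simp add: num_walks_Suc[OF \<open>finite S\<close>] sum_distrib_left sum.swap[of _ S])
    qed (simp add: num_walks_outside)
  qed
  have "Q \<in> T"
    using \<open>Q \<in> quarter_plane\<close> by (simp add: T_def)
  then have "(\<Sum>i\<le>card T. c i * walk_gf S Q $ (n + i)) = 0" for n
    using recurrence by (simp add: walk_gf_def)
  with nontrivial show ?thesis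
    by (rule fps_rational_if_linear_recurrence)
qed

lemma fps_conv_radius_ge_if_exp_bound:
  fixes F :: "'a::{banach, real_normed_div_algebra} fps"
  assumes "0 < R" and bound: "\<And>L. 1 / R < L \<Longrightarrow> \<exists>C. \<forall>n. norm (F $ n) \<le> C * L ^ n"
  shows "ereal R \<le> fps_conv_radius F"
  unfolding fps_conv_radius_def
proof (rule conv_radius_geI_ex')
  fix r :: real
  assume r: "0 < r" "ereal r < ereal R"
  define L where "L = (1 / R + 1 / r) / 2"
  have "1 / R < 1 / r"
    using r \<open>0 < R\<close> by (simp add: frac_less2)
  then have "1 / R < L" and "r * L < 1" and "0 < L"
    using r \<open>0 < R\<close> by (auto simp: L_def field_simps)
  then obtain C where C: "\<And>n. norm (F $ n) \<le> C * L ^ n"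
    using bound by blast
  show "summable (\<lambda>n. F $ n * of_real r ^ n)"
  proof (rule summable_comparison_test')
    show "summable (\<lambda>n. C * (r * L) ^ n)"
      using \<open>r * L < 1\<close> r \<open>0 < L\<close> by (intro summable_mult summable_geometric) auto
    show "norm (F $ n * of_real r ^ n) \<le> C * (r * L) ^ n" for n
      using C[of n] r by (simp add: norm_mult norm_power power_mult_distrib mult_right_mono)
  qed
qed

lemma rational_fps_poles_outside_conv_disc:
  fixes F :: "'a::{banach, real_normed_field, field_gcd} fps"
  assumes "coprime p q" and "fps_of_poly q * F = fps_of_poly p" and "poly q z = 0"
  shows "fps_conv_radius F \<le> ereal (norm z)"
proof (rule ccontr)
  assume "\<not> fps_conv_radius F \<le> ereal (norm z)"
  then have "eval_fps (fps_of_poly q * F) z = poly q z * eval_fps F z"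
    by (subst eval_fps_mult) auto
  then have "poly p z = 0"
    using assms(2,3) by simp
  then have "[:-z, 1:] dvd p" and "[:-z, 1:] dvd q"
    using assms(3) by (simp_all add: poly_eq_0_iff_dvd)
  then have "is_unit [:-z, 1:]"
    using assms(1) coprime_common_divisor by blast
  then show False
    by (simp add: is_unit_iff_degree)
qed

lemma partial_sum_le_eval_fps:
  fixes F :: "complex fps" and a :: "nat \<Rightarrow> real"
  assumes coeffs: "\<And>n. F $ n = of_real (a n)" and nonneg: "\<And>n. 0 \<le> a n"
    and "0 \<le> x" and "ereal x < fps_conv_radius F"
  shows "(\<Sum>n<N. a n * x ^ n) \<le> Re (eval_fps F (of_real x))"
proof -
  have "(\<lambda>n. F $ n * of_real x ^ n) sums eval_fps F (of_real x)"
    by (rule sums_eval_fps) (use assms(3,4) in simp)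
  then have "(\<lambda>n. a n * x ^ n) sums Re (eval_fps F (of_real x))"
    using sums_Re by (fastforce simp: coeffs simp flip: of_real_power)
  moreover from this have "(\<Sum>n<N. a n * x ^ n) \<le> (\<Sum>n. a n * x ^ n)"
    using nonneg \<open>0 \<le> x\<close> by (intro sum_le_suminf) (auto simp: sums_iff)
  ultimately show ?thesis
    by (simp add: sums_iff)
qed

lemma rational_fps_pole_if_divergent:
  fixes F :: "complex fps" and a :: "nat \<Rightarrow> real"
  assumes "coprime p q" and rational: "fps_of_poly q * F = fps_of_poly p"
    and coeffs: "\<And>n. F $ n = of_real (a n)" and nonneg: "\<And>n. 0 \<le> a n"
    and "0 < \<rho>" and radius: "ereal \<rho> \<le> fps_conv_radius F"
    and divergent: "\<not> summable (\<lambda>n. a n * \<rho> ^ n)"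
  shows "poly q (of_real \<rho>) = 0"
proof (rule ccontr)
  assume q_\<rho>: "poly q (of_real \<rho>) \<noteq> 0"
  (* Abel-type bound: for 0 < x < rho the partial sums at x are below p x / q x, which is
     continuous up to rho. *)
  define f where "f x = Re (poly p (of_real x) / poly q (of_real x))" for x
  have "(\<Sum>n<N. a n * \<rho> ^ n) \<le> f \<rho>" for N
  proof (rule tendsto_le[of "at_left \<rho>"])
    show "((\<lambda>x. \<Sum>n<N. a n * x ^ n) \<longlongrightarrow> (\<Sum>n<N. a n * \<rho> ^ n)) (at_left \<rho>)"
      by (intro tendsto_intros)
    have "isCont f \<rho>"
      unfolding f_def using q_\<rho>
      by (intro bounded_linear.continuous[OF bounded_linear_Re] continuous_intros) auto
    then show "(f \<longlongrightarrow> f \<rho>) (at_left \<rho>)"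
      by (simp add: isCont_def filterlim_at_split)
    show "\<forall>\<^sub>F x in at_left \<rho>. (\<Sum>n<N. a n * x ^ n) \<le> f x"
      using eventually_at_left_real[OF \<open>0 < \<rho>\<close>]
    proof (rule eventually_mono)
      fix x assume x: "x \<in> {0<..<\<rho>}"
      then have inside: "ereal x < fps_conv_radius F"
        using radius by (auto intro: less_le_trans[of _ "ereal \<rho>"])
      have "poly q (of_real x) \<noteq> 0"
        using rational_fps_poles_outside_conv_disc[OF assms(1) rational] inside x
        by (metis abs_of_pos greaterThanLessThan_iff not_le norm_of_real)
      moreover have "eval_fps (fps_of_poly q * F) (of_real x) = poly q (of_real x) * eval_fps F (of_real x)"
        by (subst eval_fps_mult) (use inside x in auto)
      ultimately have "eval_fps F (of_real x) = poly p (of_real x) / poly q (of_real x)"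
        using rational by (simp add: field_simps)
      then show "(\<Sum>n<N. a n * x ^ n) \<le> f x"
        using partial_sum_le_eval_fps[OF coeffs nonneg _ inside] x by (simp add: f_def)
    qed
  qed simp
  then have "summable (\<lambda>n. a n * \<rho> ^ n)"
    using nonneg \<open>0 < \<rho>\<close> by (intro summableI_nonneg_bounded) auto
  with divergent show False ..
qed

(* The Perron eigenpair of the adjacency matrix of the path 0 - 1 - ... - k; the eigenvector
   vanishes at the fictitious end points -1 and k + 1. *)

definition path_eigenvalue :: "nat \<Rightarrow> real" where
  "path_eigenvalue k = 2 * cos (pi / (2 + real k))"

definition path_eigenvector :: "nat \<Rightarrow> int \<Rightarrow> real" where
  "path_eigenvector k y = sin (pi * (real_of_int y + 1) / (2 + real k))"

lemma path_eigenvector_left_end: "path_eigenvector k (-1) = 0"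
  by (simp add: path_eigenvector_def)

lemma path_eigenvector_right_end: "path_eigenvector k (int k + 1) = 0"
proof -
  have "pi * (real_of_int (int k + 1) + 1) / (2 + real k) = pi"
    by (simp add: field_simps)
  then show ?thesis
    by (simp add: path_eigenvector_def)
qed

lemma path_eigenvector_eq:
  "path_eigenvector k (y - 1) + path_eigenvector k (y + 1) = path_eigenvalue k * path_eigenvector k y"
proof -
  define a where "a = pi * (real_of_int y + 1) / (2 + real k)"
  define b where "b = pi / (2 + real k)"
  have "pi * (real_of_int (y - 1) + 1) / (2 + real k) = a - b"
    by (simp add: a_def b_def diff_divide_distrib[symmetric] algebra_simps)
  moreover have "pi * (real_of_int (y + 1) + 1) / (2 + real k) = a + b"
    by (simp add: a_def b_def add_divide_distrib[symmetric] algebra_simps)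
  moreover have "sin (a - b) + sin (a + b) = 2 * cos b * sin a"
    by (simp add: sin_diff sin_add)
  ultimately show ?thesis
    by (simp add: path_eigenvector_def path_eigenvalue_def a_def b_def)
qed

lemma path_eigenvector_nonneg:
  assumes "-1 \<le> y" and "y \<le> int k + 1"
  shows "0 \<le> path_eigenvector k y"
  unfolding path_eigenvector_def
proof (rule sin_ge_zero)
  show "0 \<le> pi * (real_of_int y + 1) / (2 + real k)"
    using assms by simp
  have "real_of_int y + 1 \<le> 2 + real k"
    using assms by linarith
  then show "pi * (real_of_int y + 1) / (2 + real k) \<le> pi"
    by (simp add: divide_le_eq)
qed

lemma path_eigenvector_le_1: "path_eigenvector k y \<le> 1"
  by (simp add: path_eigenvector_def)

lemma sin_pi_div_pos: "0 < sin (pi / (2 + real k))"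
proof (rule sin_gt_zero)
  have "pi / (2 + real k) \<le> pi / 2"
    by (intro divide_left_mono) auto
  then show "pi / (2 + real k) < pi"
    using pi_gt_zero by linarith
qed simp

lemma path_eigenvector_ge:
  assumes "0 \<le> y" and "y \<le> int k"
  shows "sin (pi / (2 + real k)) \<le> path_eigenvector k y"
proof -
  define b where "b = pi / (2 + real k)"
  define t where "t = b * (real_of_int y + 1)"
  have "path_eigenvector k y = sin t"
    by (simp add: path_eigenvector_def t_def b_def)
  have "0 < b"
    by (simp add: b_def)
  then have "b * 1 \<le> t"
    unfolding t_def using assms by (intro mult_left_mono) auto
  have "pi = b * (2 + real k)"
    by (simp add: b_def)
  then have "pi - t = b * (real k + 1 - real_of_int y)"
    by (simp add: t_def algebra_simps)
  moreover have "b * 1 \<le> b * (real k + 1 - real_of_int y)"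
    using assms \<open>0 < b\<close> by (intro mult_left_mono) auto
  ultimately have "b \<le> t" and "b \<le> pi - t"
    using \<open>b * 1 \<le> t\<close> by simp_all
  then show ?thesis
  proof (cases "t \<le> pi / 2")
    case True
    then have "sin b \<le> sin t"
      using \<open>0 < b\<close> \<open>b \<le> t\<close> by (intro sin_monotone_2pi_le) auto
    then show ?thesis
      using \<open>path_eigenvector k y = sin t\<close> b_def by simp
  next
    case False
    then have "sin b \<le> sin (pi - t)"
      using \<open>0 < b\<close> \<open>b \<le> pi - t\<close> by (intro sin_monotone_2pi_le) auto
    then show ?thesis
      using \<open>path_eigenvector k y = sin t\<close> b_def by simp
  qed
qed

lemma path_eigenvalue_nonneg: "0 \<le> path_eigenvalue k"
proof -
  have "pi / (2 + real k) \<le> pi / 2"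
    by (intro divide_left_mono) auto
  moreover have "-(pi / 2) \<le> pi / (2 + real k)"
    by (smt (verit) divide_nonneg_nonneg of_nat_0_le_iff pi_gt_zero)
  ultimately show ?thesis
    unfolding path_eigenvalue_def by (intro mult_nonneg_nonneg cos_ge_zero) auto
qed

lemma path_eigenvalue_ge_1:
  assumes "1 \<le> k"
  shows "1 \<le> path_eigenvalue k"
proof -
  have "cos (pi / 3) \<le> cos (pi / (2 + real k))"
  proof (rule cos_monotone_0_pi_le)
    have "3 \<le> 2 + real k"
      using assms by simp
    then show "pi / (2 + real k) \<le> pi / 3"
      by (intro divide_left_mono) auto
  qed simp_all
  then show ?thesis
    by (simp add: path_eigenvalue_def cos_60)
qed

(* Weighting the level i + j by M^(i+j) makes the three level-raising steps of C cost a factor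
   1/M, which the gap L - lambda absorbs once M is large. *)

definition walk_weight :: "real \<Rightarrow> nat \<Rightarrow> int \<times> int \<Rightarrow> real" where
  "walk_weight M k P =
     (if P \<in> quarter_plane then M powr real_of_int (fst P + snd P) * path_eigenvector k (snd P) else 0)"

lemma walk_weight_nonneg:
  assumes "fst P + snd P \<le> int k + 1"
  shows "0 \<le> walk_weight M k P"
  using assms path_eigenvector_nonneg[of "snd P" k] by (auto simp: walk_weight_def quarter_plane_def)

lemma walk_weight_le:
  assumes "1 \<le> M" and "fst P + snd P \<le> j"
  shows "walk_weight M k P \<le> M powr real_of_int j"
proof (cases "P \<in> quarter_plane")
  case True
  have "M powr real_of_int (fst P + snd P) * path_eigenvector k (snd P) \<le> M powr real_of_int (fst P + snd P)"
    using path_eigenvector_le_1 by (intro mult_left_le) auto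
  also have "\<dots> \<le> M powr real_of_int j"
    using assms by (intro powr_mono) auto
  finally show ?thesis
    using True by (simp add: walk_weight_def)
qed (simp add: walk_weight_def)

lemma walk_weight_stepC_superharmonic:
  assumes "1 \<le> M" and "path_eigenvalue k < L"
    and margin: "3 / M \<le> (L - path_eigenvalue k) * sin (pi / (2 + real k))"
    and "(x, y) \<in> quarter_plane" and "x + y \<le> int k"
  shows "(\<Sum>s\<in>stepC. walk_weight M k ((x, y) - s)) \<le> L * walk_weight M k (x, y)"
proof -
  define j where "j = real_of_int (x + y)"
  let ?v = "path_eigenvector k"
  have "0 \<le> x" "0 \<le> y" "y \<le> int k"
    using assms(4,5) by (auto simp: quarter_plane_def)
  have same_level: "walk_weight M k (x + 1, y - 1) \<le> M powr j * ?v (y - 1)"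
    "walk_weight M k (x - 1, y + 1) \<le> M powr j * ?v (y + 1)"
    using path_eigenvector_nonneg[of "y - 1" k] path_eigenvector_nonneg[of "y + 1" k]
      \<open>0 \<le> y\<close> \<open>y \<le> int k\<close> by (auto simp: walk_weight_def j_def)
  have "M powr (j - 1) = M powr j / M"
    using \<open>1 \<le> M\<close> by (simp add: powr_diff)
  then have lower_level: "walk_weight M k (x, y - 1) \<le> M powr j / M"
    "walk_weight M k (x - 1, y) \<le> M powr j / M" "walk_weight M k (x - 1, y - 1) \<le> M powr j / M"
    using walk_weight_le[OF \<open>1 \<le> M\<close>, of _ "x + y - 1" k] by (auto simp: j_def)
  have "(\<Sum>s\<in>stepC. walk_weight M k ((x, y) - s)) =
        walk_weight M k (x + 1, y - 1) + walk_weight M k (x, y - 1) + walk_weight M k (x - 1, y - 1) +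
        walk_weight M k (x - 1, y) + walk_weight M k (x - 1, y + 1)"
    by (simp add: stepC_def)
  also have "\<dots> \<le> M powr j * (?v (y - 1) + ?v (y + 1)) + M powr j * (3 / M)"
    using same_level lower_level by (simp add: algebra_simps)
  also have "\<dots> = M powr j * (path_eigenvalue k * ?v y + 3 / M)"
    unfolding path_eigenvector_eq by (simp add: algebra_simps)
  also have "\<dots> \<le> M powr j * (path_eigenvalue k * ?v y + (L - path_eigenvalue k) * ?v y)"
  proof -
    have "(L - path_eigenvalue k) * sin (pi / (2 + real k)) \<le> (L - path_eigenvalue k) * ?v y"
      using assms(2) path_eigenvector_ge[OF \<open>0 \<le> y\<close> \<open>y \<le> int k\<close>] by (intro mult_left_mono) auto
    then show ?thesis
      using margin by (intro mult_left_mono) auto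
  qed
  also have "\<dots> = L * walk_weight M k (x, y)"
    using assms(4) by (simp add: walk_weight_def j_def algebra_simps)
  finally show ?thesis .
qed

lemma num_walks_stepC_le_walk_weight:
  assumes "S \<subseteq> stepC" and "1 \<le> M" and "path_eigenvalue k < L"
    and margin: "3 / M \<le> (L - path_eigenvalue k) * sin (pi / (2 + real k))"
    and "fst P + snd P \<le> int k"
  shows "real (num_walks S n P) \<le> L ^ n * walk_weight M k P / sin (pi / (2 + real k))"
  using assms(5)
proof (induction n arbitrary: P)
  case 0
  then show ?case
    using sin_pi_div_pos[of k] \<open>1 \<le> M\<close> walk_weight_nonneg[of P k M]
    by (auto simp: num_walks_0 walk_weight_def path_eigenvector_def quarter_plane_def)
next
  case (Suc n)
  define \<sigma> where "\<sigma> = sin (pi / (2 + real k))"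
  have "0 < \<sigma>" and "0 < L"
    using sin_pi_div_pos[of k] path_eigenvalue_nonneg[of k] assms(3) by (auto simp: \<sigma>_def)
  have "finite S"
    using assms(1) by (rule finite_subset) (simp add: stepC_def)
  show ?case
  proof (cases "P \<in> quarter_plane")
    case True
    obtain x y where P: "P = (x, y)"
      by fastforce
    have "real (num_walks S (Suc n) P) = (\<Sum>s\<in>S. real (num_walks S n (P - s)))"
      using True by (simp add: num_walks_Suc[OF \<open>finite S\<close>])
    also have "\<dots> \<le> (\<Sum>s\<in>stepC. real (num_walks S n (P - s)))"
      using assms(1) by (intro sum_mono2) (simp_all add: stepC_def)
    also have "\<dots> \<le> (\<Sum>s\<in>stepC. L ^ n * walk_weight M k (P - s) / \<sigma>)"
    proof (intro sum_mono Suc.IH[unfolded \<sigma>_def[symmetric]])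
      show "fst (P - s) + snd (P - s) \<le> int k" if "s \<in> stepC" for s
        using that Suc.prems by (auto simp: stepC_def)
    qed
    also have "\<dots> = L ^ n / \<sigma> * (\<Sum>s\<in>stepC. walk_weight M k ((x, y) - s))"
      by (simp add: sum_distrib_left P)
    also have "\<dots> \<le> L ^ n / \<sigma> * (L * walk_weight M k (x, y))"
      using True Suc.prems \<open>0 < L\<close> \<open>0 < \<sigma>\<close> margin unfolding P
      by (intro mult_left_mono walk_weight_stepC_superharmonic[OF \<open>1 \<le> M\<close> assms(3)]) auto
    finally show ?thesis
      by (simp add: P \<sigma>_def mult_ac)
  qed (simp add: num_walks_outside walk_weight_def)
qed

lemma num_walks_stepC_exp_bound:
  assumes "S \<subseteq> stepC" and "path_eigenvalue k < L"
  shows "\<exists>C. \<forall>n P. fst P + snd P \<le> int k \<longrightarrow> real (num_walks S n P) \<le> C * L ^ n"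
proof -
  define \<sigma> where "\<sigma> = sin (pi / (2 + real k))"
  have "0 < \<sigma>" and "0 < L"
    using sin_pi_div_pos[of k] path_eigenvalue_nonneg[of k] assms(2) by (auto simp: \<sigma>_def)
  define M where "M = max 1 (3 / ((L - path_eigenvalue k) * \<sigma>))"
  have "1 \<le> M"
    by (simp add: M_def)
  have "0 < (L - path_eigenvalue k) * \<sigma>"
    using assms(2) \<open>0 < \<sigma>\<close> by simp
  moreover have "3 / ((L - path_eigenvalue k) * \<sigma>) \<le> M"
    by (simp add: M_def)
  ultimately have "3 \<le> M * ((L - path_eigenvalue k) * \<sigma>)"
    by (simp add: divide_le_eq)
  then have margin: "3 / M \<le> (L - path_eigenvalue k) * \<sigma>"
    using \<open>1 \<le> M\<close> by (simp add: divide_le_eq mult.commute)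
  have "real (num_walks S n P) \<le> M powr real k / \<sigma> * L ^ n" if "fst P + snd P \<le> int k" for n P
  proof -
    have "real (num_walks S n P) \<le> L ^ n * walk_weight M k P / \<sigma>"
      using num_walks_stepC_le_walk_weight[OF assms(1) \<open>1 \<le> M\<close> assms(2) _ that] margin
      by (simp add: \<sigma>_def)
    also have "\<dots> \<le> L ^ n * M powr real k / \<sigma>"
      using walk_weight_le[OF \<open>1 \<le> M\<close> that] \<open>0 < L\<close> \<open>0 < \<sigma>\<close>
      by (intro divide_right_mono mult_left_mono) auto
    finally show ?thesis
      by (simp add: mult.commute)
  qed
  then show ?thesis
    by blast
qed

lemma walk_gf_conv_radius_ge:
  assumes "S \<subseteq> stepC" and "1 \<le> k" and "fst Q + snd Q \<le> int k"
  shows "ereal (1 / path_eigenvalue k) \<le> fps_conv_radius (walk_gf S Q)"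
proof (rule fps_conv_radius_ge_if_exp_bound)
  show "0 < 1 / path_eigenvalue k"
    using path_eigenvalue_ge_1[OF assms(2)] by simp
  fix L assume "1 / (1 / path_eigenvalue k) < L"
  then have "path_eigenvalue k < L"
    by simp
  then obtain C where "\<forall>n P. fst P + snd P \<le> int k \<longrightarrow> real (num_walks S n P) \<le> C * L ^ n"
    using num_walks_stepC_exp_bound[OF assms(1)] by blast
  then have "norm (walk_gf S Q $ n) \<le> C * L ^ n" for n
    using assms(3) by (cases Q) (simp add: walk_gf_def)
  then show "\<exists>C. \<forall>n. norm (walk_gf S Q $ n) \<le> C * L ^ n"
    by blast
qed

lemma num_walks_Suc_ge_sum:
  assumes "finite S" and "A \<subseteq> S" and "P \<in> quarter_plane"
  shows "(\<Sum>s\<in>A. num_walks S n (P - s)) \<le> num_walks S (Suc n) P"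
  using assms by (simp add: num_walks_Suc sum_mono2)

lemma num_walks_stepD_pos:
  assumes "finite S" and "stepD \<subseteq> S" and "d \<le> k"
  shows "0 < num_walks S (k + d) (int d, int k - int d)"
proof -
  have up: "0 < num_walks S j (0, int j)" for j
  proof (induction j)
    case (Suc j)
    have "num_walks S j ((0, int (Suc j)) - (0, 1)) \<le> num_walks S (Suc j) (0, int (Suc j))"
      using num_walks_Suc_ge_sum[OF assms(1), of "{(0, 1)}" "(0, int (Suc j))" j] assms(2)
      by (simp add: stepD_def quarter_plane_def)
    then show ?case
      using Suc by simp
  qed (simp add: num_walks_0)
  show ?thesis
    using assms(3)
  proof (induction d)
    case (Suc d)
    have "num_walks S (k + d) ((int (Suc d), int k - int (Suc d)) - (1, -1))
          \<le> num_walks S (Suc (k + d)) (int (Suc d), int k - int (Suc d))"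
      using num_walks_Suc_ge_sum[OF assms(1), of "{(1, -1)}" "(int (Suc d), int k - int (Suc d))" "k + d"]
        assms(2) Suc.prems
      by (simp add: stepD_def quarter_plane_def)
    then show ?case
      using Suc by simp
  qed (simp add: up)
qed

(* Summing over k + 1 consecutive lengths makes every point of S_k reachable in the base case
   of antidiag_block_ge. *)

definition antidiag_block :: "(int \<times> int) set \<Rightarrow> nat \<Rightarrow> nat \<Rightarrow> int \<Rightarrow> real" where
  "antidiag_block S k n y = (\<Sum>d\<le>k. real (num_walks S (n + d) (int k - y, y)))"

lemma antidiag_block_outside: "y < 0 \<or> int k < y \<Longrightarrow> antidiag_block S k n y = 0"
  by (auto simp: antidiag_block_def num_walks_outside quarter_plane_def)

lemma antidiag_block_Suc_ge:
  assumes "finite S" and "stepD \<subseteq> S" and "0 \<le> y" and "y \<le> int k"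
  shows "antidiag_block S k n (y - 1) + antidiag_block S k n (y + 1) \<le> antidiag_block S k (Suc n) y"
proof -
  have "antidiag_block S k n (y - 1) + antidiag_block S k n (y + 1) =
        (\<Sum>d\<le>k. real (num_walks S (n + d) ((int k - y, y) - (-1, 1))) +
                real (num_walks S (n + d) ((int k - y, y) - (1, -1))))"
    by (simp add: antidiag_block_def sum.distrib algebra_simps)
  also have "\<dots> \<le> (\<Sum>d\<le>k. real (num_walks S (Suc (n + d)) (int k - y, y)))"
  proof (intro sum_mono)
    fix d
    show "real (num_walks S (n + d) ((int k - y, y) - (-1, 1))) +
          real (num_walks S (n + d) ((int k - y, y) - (1, -1)))
          \<le> real (num_walks S (Suc (n + d)) (int k - y, y))"
      using num_walks_Suc_ge_sum[OF assms(1), of "{(-1, 1), (1, -1)}" "(int k - y, y)" "n + d"]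
        assms(2-4) by (simp add: stepD_def quarter_plane_def flip: of_nat_add)
  qed
  finally show ?thesis
    by (simp add: antidiag_block_def)
qed

lemma antidiag_block_ge:
  assumes "finite S" and "stepD \<subseteq> S" and "0 \<le> y" and "y \<le> int k"
  shows "path_eigenvalue k ^ t * path_eigenvector k y \<le> antidiag_block S k (k + t) y"
  using assms(3,4)
proof (induction t arbitrary: y)
  case 0
  define d where "d = nat (int k - y)"
  have "d \<le> k" and "int d = int k - y"
    using 0 by (auto simp: d_def)
  then have "1 \<le> real (num_walks S (k + d) (int k - y, y))"
    using num_walks_stepD_pos[OF assms(1,2), of d k] by simp
  also have "\<dots> \<le> antidiag_block S k k y"
    unfolding antidiag_block_def using \<open>d \<le> k\<close> by (intro member_le_sum) auto
  finally show ?case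
    using path_eigenvector_le_1[of k y] by simp
next
  case (Suc t)
  have neighbour: "path_eigenvalue k ^ t * path_eigenvector k z \<le> antidiag_block S k (k + t) z"
    if "-1 \<le> z" and "z \<le> int k + 1" for z
  proof (cases "0 \<le> z \<and> z \<le> int k")
    case False
    then have "z = -1 \<or> z = int k + 1"
      using that by auto
    then show ?thesis
      by (elim disjE) (simp_all add: path_eigenvector_left_end path_eigenvector_right_end
          antidiag_block_outside)
  qed (use Suc.IH in blast)
  have "path_eigenvalue k ^ Suc t * path_eigenvector k y =
      path_eigenvalue k ^ t * path_eigenvector k (y - 1) + path_eigenvalue k ^ t * path_eigenvector k (y + 1)"
    by (simp add: path_eigenvector_eq flip: distrib_left)
  also have "\<dots> \<le> antidiag_block S k (k + t) (y - 1) + antidiag_block S k (k + t) (y + 1)"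
    using Suc.prems by (intro add_mono neighbour) auto
  also have "\<dots> \<le> antidiag_block S k (k + Suc t) y"
    using antidiag_block_Suc_ge[OF assms(1,2) Suc.prems] by simp
  finally show ?case .
qed

lemma walk_series_diverges:
  assumes "finite S" and "stepD \<subseteq> S" and "1 \<le> k" and "i \<le> k"
  shows "\<not> summable (\<lambda>n. real (num_walks S n (int k - int i, int i)) * (1 / path_eigenvalue k) ^ n)"
proof
  define \<rho> where "\<rho> = 1 / path_eigenvalue k"
  define f where "f n = real (num_walks S n (int k - int i, int i)) * \<rho> ^ n" for n
  assume "summable (\<lambda>n. real (num_walks S n (int k - int i, int i)) * (1 / path_eigenvalue k) ^ n)"
  then have "f \<longlonglongrightarrow> 0"
    unfolding f_def \<rho>_def by (rule summable_LIMSEQ_zero)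
  then have blocks_vanish: "(\<lambda>t. \<Sum>d\<le>k. f (t + (k + d))) \<longlonglongrightarrow> 0"
    by (intro tendsto_null_sum LIMSEQ_ignore_initial_segment)
  have "0 < \<rho>" and "\<rho> \<le> 1" and "\<rho> * path_eigenvalue k = 1"
    using path_eigenvalue_ge_1[OF assms(3)] by (auto simp: \<rho>_def)
  define \<epsilon> where "\<epsilon> = \<rho> ^ (2 * k) * path_eigenvector k (int i)"
  have "0 < \<epsilon>"
    using \<open>0 < \<rho>\<close> path_eigenvector_ge[of "int i" k] sin_pi_div_pos[of k] assms(4)
    by (simp add: \<epsilon>_def)
  have "\<epsilon> \<le> (\<Sum>d\<le>k. f (t + (k + d)))" for t
  proof -
    have "\<epsilon> = \<rho> ^ (2 * k + t) * (path_eigenvalue k ^ t * path_eigenvector k (int i))"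
      using \<open>\<rho> * path_eigenvalue k = 1\<close>
      by (simp add: \<epsilon>_def power_add flip: mult.assoc power_mult_distrib)
    also have "\<dots> \<le> \<rho> ^ (2 * k + t) * antidiag_block S k (k + t) (int i)"
      using antidiag_block_ge[OF assms(1,2), of "int i" k t] assms(4) \<open>0 < \<rho>\<close>
      by (intro mult_left_mono) auto
    also have "\<dots> \<le> (\<Sum>d\<le>k. f (t + (k + d)))"
      unfolding antidiag_block_def sum_distrib_left
    proof (intro sum_mono)
      fix d assume "d \<in> {..k}"
      then have "\<rho> ^ (2 * k + t) \<le> \<rho> ^ (k + t + d)"
        using \<open>0 < \<rho>\<close> \<open>\<rho> \<le> 1\<close> by (intro power_decreasing) auto
      moreover have "f (t + (k + d)) = \<rho> ^ (k + t + d) * real (num_walks S (k + t + d) (int k - int i, int i))"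
        by (simp add: f_def add_ac mult.commute)
      ultimately show "\<rho> ^ (2 * k + t) * real (num_walks S (k + t + d) (int k - int i, int i))
          \<le> f (t + (k + d))"
        by (simp add: mult_right_mono)
    qed
    finally show ?thesis .
  qed
  then show False
    using order_tendstoD(2)[OF blocks_vanish \<open>0 < \<epsilon>\<close>]
    by (auto simp: eventually_sequentially not_less[symmetric])
qed

theorem lemma2p9:
  fixes S :: "(int \<times> int) set" and k :: nat and Q :: "int \<times> int"
  assumes "S \<in> {stepB, stepC, stepD, stepE}"
    and "k \<ge> 1"
    and "Q \<in> antidiag k"
  shows "\<exists>p q :: complex poly. q \<noteq> 0 \<and> coprime p q \<and>
           fps_of_poly q * walk_gf S Q = fps_of_poly p \<and>
           poly q (complex_of_real (1 / (2 * cos (pi / (2 + real k))))) = 0 \<and>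
           (\<forall>z. poly q z = 0 \<longrightarrow> 1 / (2 * cos (pi / (2 + real k))) \<le> cmod z)"
proof -
  obtain i where "i \<le> k" and Q: "Q = (int k - int i, int i)"
    using assms(3) unfolding antidiag_def by blast
  have "stepD \<subseteq> S" and "S \<subseteq> stepC"
    using assms(1) by (auto simp: stepB_def stepC_def stepD_def stepE_def)
  then have "finite S" and levels: "\<forall>s\<in>S. 0 \<le> fst s + snd s"
    by (auto simp: stepC_def intro: finite_subset)
  have "Q \<in> quarter_plane"
    using \<open>i \<le> k\<close> by (simp add: Q quarter_plane_def)
  then obtain p q where "q \<noteq> 0" and "coprime p q" and rational: "fps_of_poly q * walk_gf S Q = fps_of_poly p"
    using walk_gf_rational[OF \<open>finite S\<close> levels] fps_rational_coprime by metis
  define \<rho> where "\<rho> = 1 / path_eigenvalue k"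
  have radius: "ereal \<rho> \<le> fps_conv_radius (walk_gf S Q)"
    unfolding \<rho>_def using walk_gf_conv_radius_ge[OF \<open>S \<subseteq> stepC\<close> assms(2)] by (simp add: Q)
  have "poly q (of_real \<rho>) = 0"
  proof (rule rational_fps_pole_if_divergent[OF \<open>coprime p q\<close> rational _ _ _ radius])
    show "walk_gf S Q $ n = of_real (real (num_walks S n Q))" for n
      by (simp add: walk_gf_def)
    show "0 < \<rho>"
      using path_eigenvalue_ge_1[OF assms(2)] by (simp add: \<rho>_def)
    show "\<not> summable (\<lambda>n. real (num_walks S n Q) * \<rho> ^ n)"
      unfolding Q \<rho>_def by (rule walk_series_diverges[OF \<open>finite S\<close> \<open>stepD \<subseteq> S\<close> assms(2) \<open>i \<le> k\<close>])
  qed simp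
  moreover have "\<rho> \<le> cmod z" if "poly q z = 0" for z
    using order_trans[OF radius rational_fps_poles_outside_conv_disc[OF \<open>coprime p q\<close> rational that]]
    by simp
  ultimately show ?thesis
    using \<open>q \<noteq> 0\<close> \<open>coprime p q\<close> rational by (auto simp: \<rho>_def path_eigenvalue_def)
qed

end
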